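(* Let $X$ be a real Hilbert space, $I$ a finite index set, and $(T_i)_{i\in I}$ averaged nonexpansive, boundedly linearly regular operators $X\to X$ with $Z_i=\operatorname{Fix}T_i$, $Z=\bigcap_iZ_i\ne\varnothing$, and $(Z_i)_{i\in I}$ boundedly linearly regular. Let $(\pi_i)_{i\in I}$ be probabilities with $\pi_i>0$ and $\sum_i\pi_i=1$. Let $x_0\in X$ and generate $x_{n+1}=T_{i_n}x_n$ where the indices $i_n$ are chosen independently with $\mathbb P(i_n=i)=\pi_i$. Then there is a constant $\theta<1$, depending only on $x_0$ (and the data $(T_i),(\pi_i)$), such that for every $n\in\mathbb N$, $\mathbf E\big[d_Z^2(x_{n+1})\mid x_n\big]\le\theta\,d_Z^2(x_n)$.
   Context: $T$ is averaged nonexpansive if $T=(1-\lambda)\mathrm{Id}+\lambda N$ with $\lambda\in[0,1[$ and $N$ nonexpansive; boundedly linearly regular (operator) if for each $\rho>0$ there is $\kappa\ge0$ with $d_{\operatorname{Fix}T}(x)\le\kappa\|x-Tx\|$ for all $\|x\|\le\rho$. A finite family $(C_i)$ of closed convex sets with $C=\bigcap_iC_i\ne\varnothing$ is boundedly linearly regular if for every $\rho>0$ there is $\mu>0$ with $d_C(x)\le\mu\max_id_{C_i}(x)$ for all $\|x\|\le\rho$. *)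

theory Defs
  imports "HOL-Probability.Probability"
begin

definition Fix :: "('a \<Rightarrow> 'a) \<Rightarrow> 'a set" where
  "Fix T = {x. T x = x}"

definition nonexpansive :: "('a::real_normed_vector \<Rightarrow> 'a) \<Rightarrow> bool" where
  "nonexpansive N \<longleftrightarrow> (\<forall>x y. norm (N x - N y) \<le> norm (x - y))"

definition averaged_nonexpansive :: "('a::real_normed_vector \<Rightarrow> 'a) \<Rightarrow> bool" where
  "averaged_nonexpansive T \<longleftrightarrow>
     (\<exists>t::real. 0 \<le> t \<and> t < 1 \<and>
        (\<exists>N. nonexpansive N \<and> T = (\<lambda>x. (1 - t) *\<^sub>R x + t *\<^sub>R N x)))"

definition bdd_lin_reg_op :: "('a::real_normed_vector \<Rightarrow> 'a) \<Rightarrow> bool" where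
  "bdd_lin_reg_op T \<longleftrightarrow>
     (\<forall>\<rho>>0. \<exists>\<kappa>\<ge>0. \<forall>x. norm x \<le> \<rho> \<longrightarrow> infdist x (Fix T) \<le> \<kappa> * norm (x - T x))"

definition bdd_lin_reg_sets :: "('i::finite \<Rightarrow> 'a::real_normed_vector set) \<Rightarrow> bool" where
  "bdd_lin_reg_sets C \<longleftrightarrow>
     (\<forall>i. closed (C i) \<and> convex (C i)) \<and> (\<Inter>i. C i) \<noteq> {} \<and>
     (\<forall>\<rho>>0. \<exists>\<mu>>0. \<forall>x. norm x \<le> \<rho> \<longrightarrow>
        infdist x (\<Inter>i. C i) \<le> \<mu> * Max (range (\<lambda>i. infdist x (C i))))"

primrec rand_iter :: "('i \<Rightarrow> 'a \<Rightarrow> 'a) \<Rightarrow> (nat \<Rightarrow> 'b \<Rightarrow> 'i) \<Rightarrow> 'a \<Rightarrow> nat \<Rightarrow> 'b \<Rightarrow> 'a" where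
  "rand_iter T idx x0 0 \<omega> = x0"
| "rand_iter T idx x0 (Suc n) \<omega> = T (idx n \<omega>) (rand_iter T idx x0 n \<omega>)"

end

theory Submission
  imports Defs
begin

(* An averaged operator T = (1 - t) Id + t N is strongly
   quasi-nonexpansive: for every fixed point p,
     |Tx - p|^2 <= |x - p|^2 - c |x - Tx|^2   with c = (1 - t)/t > 0.
   Hence d_Z(T_i x)^2 <= d_Z(x)^2 - c_i |x - T_i x|^2 for Z = INTER_i Fix T_i, and
   averaging with the weights pi_i gives a decrease by SUM_i pi_i c_i |x - T_i x|^2.
   On a ball, bounded linear regularity of the operators and of the family of
   fixed point sets bounds d_Z(x)^2 by K * SUM_i |x - T_i x|^2, so the decrease is
   at least a fixed fraction of d_Z(x)^2: this gives a rate theta < 1 on the ball.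

   The iterates stay in a ball around a common fixed point,
   whose radius depends only on x0.  Since x_n is a measurable function of the
   indices i_0, ..., i_(n-1), which are independent of i_n, conditioning on x_n
   freezes x_n and averages over i_n:  E[phi(i_n, x_n) | x_n] = SUM_i pi_i phi(i, x_n).
   Applied to phi(i, y) = d_Z(T_i y)^2 and combined with the rate on the ball,
   this yields the corollary. *)

definition strongly_quasi_nonexpansive :: "real \<Rightarrow> ('a::real_normed_vector \<Rightarrow> 'a) \<Rightarrow> bool" where
  "strongly_quasi_nonexpansive c T \<longleftrightarrow> c > 0 \<and>
     (\<forall>x p. p \<in> Fix T \<longrightarrow> (norm (T x - p))\<^sup>2 \<le> (norm (x - p))\<^sup>2 - c * (norm (x - T x))\<^sup>2)"

lemma norm_convex_combination_squared:
  fixes u v :: "'a::real_inner"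
  shows "(norm ((1 - t) *\<^sub>R u + t *\<^sub>R v))\<^sup>2
         = (1 - t) * (norm u)\<^sup>2 + t * (norm v)\<^sup>2 - t * (1 - t) * (norm (u - v))\<^sup>2"
  unfolding power2_norm_eq_inner
  by (simp add: inner_add_left inner_add_right inner_diff_left inner_diff_right
      inner_commute[of v u] algebra_simps)

(* Averaged operators are strongly quasi-nonexpansive (constant (1-t)/t for t > 0). *)
lemma averaged_strongly_quasi_nonexpansive:
  fixes T :: "'a::real_inner \<Rightarrow> 'a"
  assumes "averaged_nonexpansive T"
  obtains c where "strongly_quasi_nonexpansive c T"
proof -
  obtain t N where t: "0 \<le> t" "t < 1" and N: "nonexpansive N"
    and T_def: "T = (\<lambda>x. (1 - t) *\<^sub>R x + t *\<^sub>R N x)"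
    using assms unfolding averaged_nonexpansive_def by blast
  show ?thesis
  proof (cases "t = 0")
    case True
    then have "strongly_quasi_nonexpansive 1 T"
      by (simp add: strongly_quasi_nonexpansive_def T_def)
    then show ?thesis by (rule that)
  next
    case False
    with t have t_pos: "t > 0" by simp
    have "strongly_quasi_nonexpansive ((1 - t) / t) T"
      unfolding strongly_quasi_nonexpansive_def
    proof (intro conjI allI impI)
      show "(1 - t) / t > 0" using t t_pos by simp
      fix x p assume "p \<in> Fix T"
      then have "t *\<^sub>R (N p - p) = 0"
        by (simp add: Fix_def T_def algebra_simps)
      then have Np: "N p = p" using t_pos by simp
      define u where "u = x - p"
      define v where "v = N x - p"
      have "norm v \<le> norm u"
        using N Np unfolding nonexpansive_def u_def v_def by metis
      then have uv: "(norm v)\<^sup>2 \<le> (norm u)\<^sup>2" by (simp add: power_mono)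
      have Tx: "T x - p = (1 - t) *\<^sub>R u + t *\<^sub>R v" and res: "x - T x = t *\<^sub>R (u - v)"
        unfolding T_def u_def v_def by (simp_all add: algebra_simps)
      have "(1 - t) / t * (norm (x - T x))\<^sup>2 = t * (1 - t) * (norm (u - v))\<^sup>2"
        using t_pos by (simp add: res power2_eq_square)
      moreover have "(norm (T x - p))\<^sup>2 = (1 - t) * (norm u)\<^sup>2 + t * (norm v)\<^sup>2 - t * (1 - t) * (norm (u - v))\<^sup>2"
        unfolding Tx by (rule norm_convex_combination_squared)
      moreover have "t * (norm v)\<^sup>2 \<le> t * (norm u)\<^sup>2" using uv t by (simp add: mult_left_mono)
      ultimately show "(norm (T x - p))\<^sup>2 \<le> (norm (x - p))\<^sup>2 - (1 - t) / t * (norm (x - T x))\<^sup>2"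
        by (simp add: u_def algebra_simps)
    qed
    then show ?thesis by (rule that)
  qed
qed

lemma strongly_quasi_nonexpansive_quasi:
  assumes "strongly_quasi_nonexpansive c T" "p \<in> Fix T"
  shows "norm (T x - p) \<le> norm (x - p)"
proof -
  have "(norm (T x - p))\<^sup>2 \<le> (norm (x - p))\<^sup>2"
    using assms unfolding strongly_quasi_nonexpansive_def
    by (smt (verit) mult_nonneg_nonneg zero_le_power2)
  then show ?thesis by (simp add: power2_le_iff_abs_le)
qed

lemma averaged_quasi_nonexpansive:
  fixes T :: "'a::real_inner \<Rightarrow> 'a"
  assumes "averaged_nonexpansive T" "p \<in> Fix T"
  shows "norm (T x - p) \<le> norm (x - p)"
  using averaged_strongly_quasi_nonexpansive[OF assms(1)] strongly_quasi_nonexpansive_quasi assms(2)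
  by metis

lemma strongly_quasi_nonexpansive_infdist:
  assumes T: "strongly_quasi_nonexpansive c T" and Z: "Z \<subseteq> Fix T" "Z \<noteq> {}"
  shows "(infdist (T x) Z)\<^sup>2 \<le> (infdist x Z)\<^sup>2 - c * (norm (x - T x))\<^sup>2"
proof -
  define a where "a = sqrt ((infdist (T x) Z)\<^sup>2 + c * (norm (x - T x))\<^sup>2)"
  have c: "c > 0" using T by (simp add: strongly_quasi_nonexpansive_def)
  have "a \<le> dist x p" if p: "p \<in> Z" for p
  proof -
    have "infdist (T x) Z \<le> norm (T x - p)" using infdist_le[OF p] by (simp add: dist_norm)
    then have "(infdist (T x) Z)\<^sup>2 \<le> (norm (T x - p))\<^sup>2" by (rule power_mono[OF _ infdist_nonneg])
    moreover have "(norm (T x - p))\<^sup>2 \<le> (norm (x - p))\<^sup>2 - c * (norm (x - T x))\<^sup>2"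
      using T p Z unfolding strongly_quasi_nonexpansive_def by blast
    ultimately have "a\<^sup>2 \<le> (dist x p)\<^sup>2" using c by (simp add: a_def dist_norm)
    then show ?thesis using real_le_rsqrt a_def by force
  qed
  then have "a \<le> infdist x Z" by (simp add: infdist_notempty[OF Z(2)] cINF_greatest[OF Z(2)])
  then have "a\<^sup>2 \<le> (infdist x Z)\<^sup>2" by (rule power_mono) (use c in \<open>simp add: a_def\<close>)
  then show ?thesis using c by (simp add: a_def)
qed

lemma residual_error_bound:
  fixes T :: "'i::finite \<Rightarrow> 'a::real_normed_vector \<Rightarrow> 'a"
  assumes reg: "\<And>i. bdd_lin_reg_op (T i)"
    and Z_reg: "bdd_lin_reg_sets (\<lambda>i. Fix (T i))"
    and rho: "\<rho> > 0"
  obtains K where "K \<ge> 0"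
    "\<And>x. norm x \<le> \<rho> \<Longrightarrow> (infdist x (\<Inter>i. Fix (T i)))\<^sup>2 \<le> K * (\<Sum>i\<in>UNIV. (norm (x - T i x))\<^sup>2)"
proof -
  have "\<forall>i. \<exists>\<kappa>\<ge>0. \<forall>x. norm x \<le> \<rho> \<longrightarrow> infdist x (Fix (T i)) \<le> \<kappa> * norm (x - T i x)"
    using reg rho unfolding bdd_lin_reg_op_def by blast
  then obtain \<kappa> where \<kappa>: "\<And>i. \<kappa> i \<ge> 0"
    "\<And>i x. norm x \<le> \<rho> \<Longrightarrow> infdist x (Fix (T i)) \<le> \<kappa> i * norm (x - T i x)"
    by metis
  obtain \<mu> where \<mu>: "\<mu> > 0"
    "\<And>x. norm x \<le> \<rho> \<Longrightarrow> infdist x (\<Inter>i. Fix (T i)) \<le> \<mu> * Max (range (\<lambda>i. infdist x (Fix (T i))))"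
    using Z_reg rho unfolding bdd_lin_reg_sets_def by blast
  define k where "k = (\<Sum>i\<in>UNIV. \<kappa> i)"
  have k: "\<kappa> i \<le> k" for i unfolding k_def by (rule member_le_sum) (auto intro: \<kappa>(1))
  show ?thesis
  proof (rule that[of "(\<mu> * k)\<^sup>2"])
    fix x :: 'a assume x: "norm x \<le> \<rho>"
    define r where "r i = norm (x - T i x)" for i
    have "Max (range (\<lambda>i. infdist x (Fix (T i)))) \<in> range (\<lambda>i. infdist x (Fix (T i)))"
      by (rule Max_in) auto
    then obtain j where j: "Max (range (\<lambda>i. infdist x (Fix (T i)))) = infdist x (Fix (T j))"
      by blast
    have "infdist x (\<Inter>i. Fix (T i)) \<le> \<mu> * infdist x (Fix (T j))"
      using \<mu>(2)[OF x] j by simp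
    also have "\<dots> \<le> \<mu> * (\<kappa> j * r j)"
      by (rule mult_left_mono) (use \<kappa>(2)[OF x] \<mu>(1) in \<open>auto simp: r_def\<close>)
    also have "\<dots> \<le> \<mu> * (k * r j)"
      by (intro mult_left_mono mult_right_mono) (use k \<mu>(1) in \<open>auto simp: r_def\<close>)
    finally have "infdist x (\<Inter>i. Fix (T i)) \<le> \<mu> * k * r j" by (simp add: mult.assoc)
    then have "(infdist x (\<Inter>i. Fix (T i)))\<^sup>2 \<le> (\<mu> * k * r j)\<^sup>2"
      by (rule power_mono[OF _ infdist_nonneg])
    also have "\<dots> = (\<mu> * k)\<^sup>2 * (r j)\<^sup>2" by (rule power_mult_distrib)
    also have "\<dots> \<le> (\<mu> * k)\<^sup>2 * (\<Sum>i\<in>UNIV. (r i)\<^sup>2)"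
      by (intro mult_left_mono member_le_sum) auto
    finally show "(infdist x (\<Inter>i. Fix (T i)))\<^sup>2 \<le> (\<mu> * k)\<^sup>2 * (\<Sum>i\<in>UNIV. (norm (x - T i x))\<^sup>2)"
      unfolding r_def .
  qed simp
qed

lemma expected_infdist_decrease:
  fixes T :: "'i::finite \<Rightarrow> 'a::real_normed_vector \<Rightarrow> 'a"
  assumes T: "\<And>i. strongly_quasi_nonexpansive (c i) (T i)"
    and Z_ne: "(\<Inter>i. Fix (T i)) \<noteq> {}"
    and pi_pos: "\<And>i. \<pi> i > 0" and pi_sum: "(\<Sum>i\<in>UNIV. \<pi> i) = 1"
  shows "(\<Sum>i\<in>UNIV. \<pi> i * (infdist (T i x) (\<Inter>i. Fix (T i)))\<^sup>2)
         \<le> (infdist x (\<Inter>i. Fix (T i)))\<^sup>2 - (\<Sum>i\<in>UNIV. \<pi> i * c i * (norm (x - T i x))\<^sup>2)"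
proof -
  define d where "d = infdist x (\<Inter>i. Fix (T i))"
  have "(infdist (T i x) (\<Inter>i. Fix (T i)))\<^sup>2 \<le> d\<^sup>2 - c i * (norm (x - T i x))\<^sup>2" for i
    unfolding d_def by (rule strongly_quasi_nonexpansive_infdist[OF T _ Z_ne]) auto
  then have "(\<Sum>i\<in>UNIV. \<pi> i * (infdist (T i x) (\<Inter>i. Fix (T i)))\<^sup>2)
             \<le> (\<Sum>i\<in>UNIV. \<pi> i * (d\<^sup>2 - c i * (norm (x - T i x))\<^sup>2))"
    using pi_pos by (intro sum_mono mult_left_mono) (auto intro: less_imp_le)
  also have "\<dots> = d\<^sup>2 - (\<Sum>i\<in>UNIV. \<pi> i * c i * (norm (x - T i x))\<^sup>2)"
    by (simp add: right_diff_distrib sum_subtractf sum_distrib_right[symmetric] pi_sum mult.assoc)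
  finally show ?thesis unfolding d_def .
qed

lemma linear_rate_on_ball:
  fixes T :: "'i::finite \<Rightarrow> 'a::real_inner \<Rightarrow> 'a"
  assumes avg: "\<And>i. averaged_nonexpansive (T i)"
    and reg: "\<And>i. bdd_lin_reg_op (T i)"
    and Z_reg: "bdd_lin_reg_sets (\<lambda>i. Fix (T i))"
    and pi_pos: "\<And>i. \<pi> i > 0" and pi_sum: "(\<Sum>i\<in>UNIV. \<pi> i) = 1"
    and rho: "\<rho> > 0"
  obtains \<theta> where "\<theta> < 1" "\<And>x. norm x \<le> \<rho> \<Longrightarrow>
     (\<Sum>i\<in>UNIV. \<pi> i * (infdist (T i x) (\<Inter>i. Fix (T i)))\<^sup>2) \<le> \<theta> * (infdist x (\<Inter>i. Fix (T i)))\<^sup>2"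
proof -
  define Z where "Z = (\<Inter>i. Fix (T i))"
  have Z_ne: "Z \<noteq> {}" using Z_reg unfolding bdd_lin_reg_sets_def Z_def by blast
  have "\<exists>c. strongly_quasi_nonexpansive c (T i)" for i
    using averaged_strongly_quasi_nonexpansive[OF avg] by blast
  then obtain c where c: "\<And>i. strongly_quasi_nonexpansive (c i) (T i)"
    by metis
  obtain K where K: "K \<ge> 0"
    "\<And>x. norm x \<le> \<rho> \<Longrightarrow> (infdist x Z)\<^sup>2 \<le> K * (\<Sum>i\<in>UNIV. (norm (x - T i x))\<^sup>2)"
    using residual_error_bound[OF reg Z_reg rho] unfolding Z_def by blast
  define m where "m = Min (range (\<lambda>i. \<pi> i * c i))"
  have m_pos: "m > 0"
    using pi_pos c unfolding m_def strongly_quasi_nonexpansive_def by (subst Min_gr_iff) auto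
  have m_le: "m \<le> \<pi> i * c i" for i unfolding m_def by (rule Min_le) auto
  show ?thesis
  proof (rule that[of "1 - m / (K + 1)"])
    show "1 - m / (K + 1) < 1" using m_pos K(1) by simp
    fix x :: 'a assume x: "norm x \<le> \<rho>"
    define s where "s = (\<Sum>i\<in>UNIV. (norm (x - T i x))\<^sup>2)"
    have "(infdist x Z)\<^sup>2 \<le> (K + 1) * s"
      using K(2)[OF x] sum_nonneg[of UNIV "\<lambda>i. (norm (x - T i x))\<^sup>2"] by (simp add: s_def algebra_simps)
    then have "m / (K + 1) * (infdist x Z)\<^sup>2 \<le> m / (K + 1) * ((K + 1) * s)"
      by (rule mult_left_mono) (use m_pos K(1) in auto)
    also have "\<dots> = m * s" using K(1) by (simp add: field_simps add_nonneg_eq_0_iff)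
    also have "\<dots> \<le> (\<Sum>i\<in>UNIV. \<pi> i * c i * (norm (x - T i x))\<^sup>2)"
      unfolding s_def sum_distrib_left using m_le by (intro sum_mono mult_right_mono) auto
    finally have gain: "m / (K + 1) * (infdist x Z)\<^sup>2 \<le> (\<Sum>i\<in>UNIV. \<pi> i * c i * (norm (x - T i x))\<^sup>2)" .
    have "(\<Sum>i\<in>UNIV. \<pi> i * (infdist (T i x) Z)\<^sup>2)
          \<le> (infdist x Z)\<^sup>2 - (\<Sum>i\<in>UNIV. \<pi> i * c i * (norm (x - T i x))\<^sup>2)"
      unfolding Z_def by (rule expected_infdist_decrease[OF c _ pi_pos pi_sum]) (use Z_ne Z_def in simp)
    moreover have "(1 - m / (K + 1)) * (infdist x Z)\<^sup>2 = (infdist x Z)\<^sup>2 - m / (K + 1) * (infdist x Z)\<^sup>2"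
      by (simp add: left_diff_distrib)
    ultimately show "(\<Sum>i\<in>UNIV. \<pi> i * (infdist (T i x) (\<Inter>i. Fix (T i)))\<^sup>2)
                     \<le> (1 - m / (K + 1)) * (infdist x (\<Inter>i. Fix (T i)))\<^sup>2"
      using gain unfolding Z_def by linarith
  qed
qed

(* Averaged operators are Lipschitz, hence continuous; this gives Borel measurability of the iterates. *)
lemma averaged_nonexpansive_continuous:
  fixes T :: "'a::real_normed_vector \<Rightarrow> 'a"
  assumes "averaged_nonexpansive T"
  shows "continuous_on UNIV T"
proof -
  obtain t N where N: "nonexpansive N" and T_def: "T = (\<lambda>x. (1 - t) *\<^sub>R x + t *\<^sub>R N x)"
    using assms unfolding averaged_nonexpansive_def by blast
  have "1-lipschitz_on UNIV N" using N unfolding nonexpansive_def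
    by (intro lipschitz_onI) (auto simp: dist_norm)
  then have "continuous_on UNIV N" by (rule lipschitz_on_continuous_on)
  then show ?thesis unfolding T_def by (intro continuous_intros)
qed

lemma rand_iter_bounded:
  assumes "\<And>i x. norm (T i x - z) \<le> norm (x - z)"
  shows "norm (rand_iter T idx x0 n \<omega> - z) \<le> norm (x0 - z)"
  by (induction n) (auto intro: order_trans[OF assms])

(* The k-th iterate depends only on the indices chosen before step n (for k <= n) ... *)
lemma rand_iter_history:
  "k \<le> n \<Longrightarrow> rand_iter T idx x0 k \<omega> = rand_iter T (\<lambda>k f. f k) x0 k (restrict (\<lambda>i. idx i \<omega>) {..<n})"
  by (induction k) auto

lemma rand_iter_history_measurable:
  fixes T :: "'i::countable \<Rightarrow> 'a::topological_space \<Rightarrow> 'a"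
  assumes T_meas: "\<And>i. T i \<in> borel_measurable borel" and "k \<le> n"
  shows "rand_iter T (\<lambda>k f. f k) x0 k \<in> borel_measurable (PiM {..<n} (\<lambda>_. count_space UNIV))"
  using assms(2)
proof (induction k)
  case 0
  then show ?case by simp
next
  case (Suc k)
  have "(\<lambda>f. T (f k) (rand_iter T (\<lambda>k f. f k) x0 k f)) \<in> borel_measurable (PiM {..<n} (\<lambda>_. count_space UNIV))"
  proof (rule measurable_compose_countable[where f="\<lambda>i f. T i (rand_iter T (\<lambda>k f. f k) x0 k f)"])
    show "(\<lambda>f. T i (rand_iter T (\<lambda>k f. f k) x0 k f)) \<in> borel_measurable (PiM {..<n} (\<lambda>_. count_space UNIV))" for i
      using Suc by (intro measurable_compose[OF _ T_meas]) simp
    show "(\<lambda>f. f k) \<in> measurable (PiM {..<n} (\<lambda>_. count_space UNIV)) (count_space UNIV)"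
      using Suc by (intro measurable_component_singleton) simp
  qed
  then show ?case by simp
qed

lemma integral_random_choice:
  fixes idx :: "nat \<Rightarrow> 'b \<Rightarrow> 'i::finite" and v :: "'i \<Rightarrow> (nat \<Rightarrow> 'i) \<Rightarrow> real"
  assumes "prob_space M"
    and ind: "prob_space.indep_vars M (\<lambda>_. count_space UNIV) idx UNIV"
    and law: "\<And>i. measure M {\<omega> \<in> space M. idx n \<omega> = i} = \<pi> i"
    and v_meas: "\<And>i. v i \<in> borel_measurable (PiM {..<n} (\<lambda>_. count_space UNIV))"
    and v_bdd: "\<And>i f. \<bar>v i f\<bar> \<le> B"
  defines "H \<equiv> \<lambda>\<omega>. restrict (\<lambda>k. idx k \<omega>) {..<n}"
  shows "(\<integral>\<omega>. v (idx n \<omega>) (H \<omega>) \<partial>M) = (\<Sum>i\<in>UNIV. \<pi> i * (\<integral>\<omega>. v i (H \<omega>) \<partial>M))"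
proof -
  interpret P: prob_space M by fact
  define N where "N \<omega> = restrict (\<lambda>k. idx k \<omega>) {n}" for \<omega>
  define u where "u i f = (indicator {i} (f n) :: real)" for i :: 'i and f :: "nat \<Rightarrow> 'i"
  have indep: "P.indep_var (PiM {n} (\<lambda>_. count_space UNIV)) N (PiM {..<n} (\<lambda>_. count_space UNIV)) H"
    unfolding H_def N_def by (rule P.indep_var_restrict[OF ind]) auto
  have u_meas: "u i \<in> borel_measurable (PiM {n} (\<lambda>_. count_space UNIV))" for i
    unfolding u_def by (rule measurable_compose[OF measurable_component_singleton[of n "{n}"]]) auto
  have iv: "P.indep_var borel (\<lambda>\<omega>. u i (N \<omega>)) borel (\<lambda>\<omega>. v i (H \<omega>))" for i
    by (rule P.indep_var_compose[unfolded comp_def, OF indep u_meas v_meas])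
  have uN: "u i (N \<omega>) = indicator {\<omega>. idx n \<omega> = i} \<omega>" for i \<omega>
    by (simp add: u_def N_def indicator_def)
  have u_int: "integrable M (\<lambda>\<omega>. u i (N \<omega>))" for i
    by (rule P.integrable_const_bound[where B=1])
      (use P.indep_var_rv1[OF iv[of i]] in \<open>auto simp: uN indicator_def\<close>)
  have v_int: "integrable M (\<lambda>\<omega>. v i (H \<omega>))" for i
    by (rule P.integrable_const_bound[where B=B])
      (use v_bdd P.indep_var_rv2[OF iv[of i]] in auto)
  have u_expect: "(\<integral>\<omega>. u i (N \<omega>) \<partial>M) = \<pi> i" for i
  proof -
    have "{\<omega>. idx n \<omega> = i} \<inter> space M = {\<omega> \<in> space M. idx n \<omega> = i}" by auto
    then show ?thesis unfolding uN using law by simp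
  qed
  have "(\<integral>\<omega>. v (idx n \<omega>) (H \<omega>) \<partial>M) = (\<integral>\<omega>. (\<Sum>i\<in>UNIV. u i (N \<omega>) * v i (H \<omega>)) \<partial>M)"
  proof (rule Bochner_Integration.integral_cong[OF refl])
    fix \<omega>
    have "(\<Sum>i\<in>UNIV. u i (N \<omega>) * v i (H \<omega>)) = (\<Sum>i\<in>UNIV. if idx n \<omega> = i then v i (H \<omega>) else 0)"
      by (intro sum.cong) (auto simp: uN)
    then show "v (idx n \<omega>) (H \<omega>) = (\<Sum>i\<in>UNIV. u i (N \<omega>) * v i (H \<omega>))" by simp
  qed
  also have "\<dots> = (\<Sum>i\<in>UNIV. (\<integral>\<omega>. u i (N \<omega>) * v i (H \<omega>) \<partial>M))"
    by (rule Bochner_Integration.integral_sum) (rule P.indep_var_integrable[OF iv u_int v_int])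
  also have "\<dots> = (\<Sum>i\<in>UNIV. \<pi> i * (\<integral>\<omega>. v i (H \<omega>) \<partial>M))"
    by (intro sum.cong refl) (simp add: P.indep_var_lebesgue_integral[OF iv u_int v_int] u_expect)
  finally show ?thesis .
qed

lemma set_integral_random_choice:
  fixes idx :: "nat \<Rightarrow> 'b \<Rightarrow> 'i::finite" and R :: "(nat \<Rightarrow> 'i) \<Rightarrow> 'a::topological_space"
    and \<phi> :: "'i \<Rightarrow> 'a \<Rightarrow> real"
  assumes "prob_space M"
    and ind: "prob_space.indep_vars M (\<lambda>_. count_space UNIV) idx UNIV"
    and law: "\<And>i. measure M {\<omega> \<in> space M. idx n \<omega> = i} = \<pi> i"
    and R_meas: "R \<in> borel_measurable (PiM {..<n} (\<lambda>_. count_space UNIV))"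
    and \<phi>_meas: "\<And>i. \<phi> i \<in> borel_measurable borel"
    and \<phi>_bdd: "\<And>i f. \<bar>\<phi> i (R f)\<bar> \<le> B"
    and C: "C \<in> sets borel"
  defines "H \<equiv> \<lambda>\<omega>. restrict (\<lambda>k. idx k \<omega>) {..<n}"
  defines "A \<equiv> (\<lambda>\<omega>. R (H \<omega>)) -` C \<inter> space M"
  shows "(\<integral>\<omega>\<in>A. \<phi> (idx n \<omega>) (R (H \<omega>)) \<partial>M) = (\<integral>\<omega>\<in>A. (\<Sum>i\<in>UNIV. \<pi> i * \<phi> i (R (H \<omega>))) \<partial>M)"
proof -
  interpret P: prob_space M by fact
  define v where "v i f = indicator C (R f) * \<phi> i (R f)" for i f
  have H_meas: "H \<in> measurable M (PiM {..<n} (\<lambda>_. count_space UNIV))"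
    using ind unfolding H_def P.indep_vars_def by (intro measurable_restrict) auto
  have v_meas: "v i \<in> borel_measurable (PiM {..<n} (\<lambda>_. count_space UNIV))" for i
    unfolding v_def using R_meas \<phi>_meas C by measurable
  have v_bdd: "\<bar>v i f\<bar> \<le> B" for i f
    using \<phi>_bdd[of i f] by (auto simp: v_def indicator_def)
  have "(\<integral>\<omega>\<in>A. \<phi> (idx n \<omega>) (R (H \<omega>)) \<partial>M) = (\<integral>\<omega>. v (idx n \<omega>) (H \<omega>) \<partial>M)"
    unfolding set_lebesgue_integral_def
    by (rule Bochner_Integration.integral_cong) (auto simp: A_def v_def indicator_def)
  also have "\<dots> = (\<Sum>i\<in>UNIV. \<pi> i * (\<integral>\<omega>. v i (H \<omega>) \<partial>M))"
    unfolding H_def by (rule integral_random_choice[OF \<open>prob_space M\<close> ind law v_meas v_bdd])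
  also have "\<dots> = (\<integral>\<omega>. (\<Sum>i\<in>UNIV. \<pi> i * v i (H \<omega>)) \<partial>M)"
  proof -
    have "integrable M (\<lambda>\<omega>. v i (H \<omega>))" for i
      by (rule P.integrable_const_bound[where B=B])
        (use v_bdd measurable_compose[OF H_meas v_meas] in auto)
    then show ?thesis by (subst Bochner_Integration.integral_sum) auto
  qed
  also have "\<dots> = (\<integral>\<omega>\<in>A. (\<Sum>i\<in>UNIV. \<pi> i * \<phi> i (R (H \<omega>))) \<partial>M)"
    unfolding set_lebesgue_integral_def
    by (rule Bochner_Integration.integral_cong)
      (auto simp: A_def v_def indicator_def sum_distrib_left)
  finally show ?thesis .
qed

lemma cond_exp_random_choice:
  fixes idx :: "nat \<Rightarrow> 'b \<Rightarrow> 'i::finite" and R :: "(nat \<Rightarrow> 'i) \<Rightarrow> 'a::topological_space"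
    and \<phi> :: "'i \<Rightarrow> 'a \<Rightarrow> real"
  assumes "prob_space M"
    and ind: "prob_space.indep_vars M (\<lambda>_. count_space UNIV) idx UNIV"
    and law: "\<And>i. measure M {\<omega> \<in> space M. idx n \<omega> = i} = \<pi> i"
    and R_meas: "R \<in> borel_measurable (PiM {..<n} (\<lambda>_. count_space UNIV))"
    and \<phi>_meas: "\<And>i. \<phi> i \<in> borel_measurable borel"
    and \<phi>_bdd: "\<And>i f. \<bar>\<phi> i (R f)\<bar> \<le> B"
  defines "H \<equiv> \<lambda>\<omega>. restrict (\<lambda>k. idx k \<omega>) {..<n}"
  shows "AE \<omega> in M. real_cond_exp M (vimage_algebra (space M) (\<lambda>\<omega>. R (H \<omega>)) borel)
                     (\<lambda>\<omega>. \<phi> (idx n \<omega>) (R (H \<omega>))) \<omega>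
                   = (\<Sum>i\<in>UNIV. \<pi> i * \<phi> i (R (H \<omega>)))"
proof -
  interpret P: prob_space M by fact
  define X where "X \<omega> = R (H \<omega>)" for \<omega>
  define F where "F = vimage_algebra (space M) X borel"
  define \<psi> where "\<psi> y = (\<Sum>i\<in>UNIV. \<pi> i * \<phi> i y)" for y
  have idx_meas: "idx k \<in> measurable M (count_space UNIV)" for k
    using ind unfolding P.indep_vars_def by auto
  have X_meas: "X \<in> borel_measurable M"
    unfolding X_def H_def using R_meas idx_meas by (intro measurable_compose[OF measurable_restrict]) auto
  have "subalgebra M F"
    unfolding subalgebra_def F_def using sets_image_in_sets[OF refl X_meas] by simp
  then interpret S: sigma_finite_subalgebra M F
    by (intro finite_measure_subalgebra_is_sigma_finite) unfold_locales
  have \<phi>X_meas: "(\<lambda>\<omega>. \<phi> i (X \<omega>)) \<in> borel_measurable M" for i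
    by (rule measurable_compose[OF X_meas \<phi>_meas])
  have \<phi>X_int: "integrable M (\<lambda>\<omega>. \<phi> i (X \<omega>))" for i
    by (rule P.integrable_const_bound[where B=B]) (use \<phi>X_meas \<phi>_bdd in \<open>auto simp: X_def\<close>)
  have g_int: "integrable M (\<lambda>\<omega>. \<phi> (idx n \<omega>) (X \<omega>))"
    by (rule P.integrable_const_bound[where B=B])
      (use measurable_compose_countable[OF \<phi>X_meas idx_meas] \<phi>_bdd in \<open>auto simp: X_def\<close>)
  have \<psi>X_meas: "(\<lambda>\<omega>. \<psi> (X \<omega>)) \<in> borel_measurable F"
    unfolding F_def \<psi>_def using \<phi>_meas by (intro measurable_compose[OF measurable_vimage_algebra1]) auto
  have \<psi>X_int: "integrable M (\<lambda>\<omega>. \<psi> (X \<omega>))"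
    unfolding \<psi>_def using \<phi>X_int by auto
  have "(\<integral>\<omega>\<in>A. \<phi> (idx n \<omega>) (X \<omega>) \<partial>M) = (\<integral>\<omega>\<in>A. \<psi> (X \<omega>) \<partial>M)" if "A \<in> sets F" for A
  proof -
    obtain C where C: "C \<in> sets borel" "A = X -` C \<inter> space M"
      using \<open>A \<in> sets F\<close> unfolding F_def by (subst (asm) sets_vimage_algebra2) auto
    show ?thesis
      using set_integral_random_choice[OF \<open>prob_space M\<close> ind law R_meas \<phi>_meas \<phi>_bdd C(1)]
      unfolding C(2) X_def \<psi>_def H_def .
  qed
  then have "AE \<omega> in M. real_cond_exp M F (\<lambda>\<omega>. \<phi> (idx n \<omega>) (X \<omega>)) \<omega> = \<psi> (X \<omega>)"
    by (rule S.real_cond_exp_charact[OF _ g_int \<psi>X_int \<psi>X_meas])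
  then show ?thesis unfolding F_def X_def \<psi>_def .
qed

lemma cond_exp_rand_iter_step:
  fixes T :: "'i::finite \<Rightarrow> 'a::real_inner \<Rightarrow> 'a" and idx :: "nat \<Rightarrow> 'b \<Rightarrow> 'i"
  assumes avg: "\<And>i. averaged_nonexpansive (T i)"
    and z: "z \<in> (\<Inter>i. Fix (T i))"
    and "prob_space M"
    and ind: "prob_space.indep_vars M (\<lambda>_. count_space UNIV) idx UNIV"
    and law: "\<And>i. measure M {\<omega> \<in> space M. idx n \<omega> = i} = \<pi> i"
  shows "AE \<omega> in M.
           real_cond_exp M (vimage_algebra (space M) (rand_iter T idx x0 n) borel)
             (\<lambda>\<omega>. (infdist (rand_iter T idx x0 (Suc n) \<omega>) (\<Inter>i. Fix (T i)))\<^sup>2) \<omega>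
           = (\<Sum>i\<in>UNIV. \<pi> i * (infdist (T i (rand_iter T idx x0 n \<omega>)) (\<Inter>i. Fix (T i)))\<^sup>2)"
proof -
  define Z where "Z = (\<Inter>i. Fix (T i))"
  define R where "R = rand_iter T (\<lambda>k f. f k) x0 n"
  define H where "H \<omega> = restrict (\<lambda>k. idx k \<omega>) {..<n}" for \<omega>
  have history: "rand_iter T idx x0 n \<omega> = R (H \<omega>)" for \<omega>
    unfolding R_def H_def by (rule rand_iter_history) simp
  have T_meas: "T i \<in> borel_measurable borel" for i
    by (rule borel_measurable_continuous_onI[OF averaged_nonexpansive_continuous[OF avg]])
  have R_meas: "R \<in> borel_measurable (PiM {..<n} (\<lambda>_. count_space UNIV))"
    unfolding R_def by (rule rand_iter_history_measurable[OF T_meas]) simp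
  have quasi: "norm (T i x - z) \<le> norm (x - z)" for i x
    using z by (intro averaged_quasi_nonexpansive[OF avg]) auto
  have "\<bar>(infdist (T i (R f)) Z)\<^sup>2\<bar> \<le> (norm (x0 - z))\<^sup>2" for i f
  proof -
    have "infdist (T i (R f)) Z \<le> norm (T i (R f) - z)"
      using infdist_le[of z Z] z by (simp add: Z_def dist_norm)
    also have "\<dots> \<le> norm (R f - z)" by (rule quasi)
    also have "\<dots> \<le> norm (x0 - z)" unfolding R_def by (rule rand_iter_bounded) (rule quasi)
    finally show ?thesis by (simp add: power_mono[OF _ infdist_nonneg])
  qed
  moreover have "(\<lambda>y. (infdist (T i y) Z)\<^sup>2) \<in> borel_measurable borel" for i
    using averaged_nonexpansive_continuous[OF avg]
    by (intro borel_measurable_continuous_onI continuous_intros) auto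
  ultimately have "AE \<omega> in M.
      real_cond_exp M (vimage_algebra (space M) (\<lambda>\<omega>. R (H \<omega>)) borel)
        (\<lambda>\<omega>. (infdist (T (idx n \<omega>) (R (H \<omega>))) Z)\<^sup>2) \<omega>
      = (\<Sum>i\<in>UNIV. \<pi> i * (infdist (T i (R (H \<omega>))) Z)\<^sup>2)"
    unfolding H_def
    by (intro cond_exp_random_choice[OF \<open>prob_space M\<close> ind law R_meas]) auto
  moreover have "rand_iter T idx x0 n = (\<lambda>\<omega>. R (H \<omega>))" by (intro ext history)
  ultimately show ?thesis unfolding Z_def[symmetric] by (simp add: history)
qed

(* Main result: theta is the rate on a ball containing all iterates; the radius of that
   ball depends on x0 only through its distance to a common fixed point. *)
theorem corollary6p4:
  fixes T :: "'i::finite \<Rightarrow> 'a::{real_inner, complete_space} \<Rightarrow> 'a"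
    and \<pi> :: "'i \<Rightarrow> real"
    and x0 :: 'a
  assumes avg: "\<And>i. averaged_nonexpansive (T i)"
    and reg: "\<And>i. bdd_lin_reg_op (T i)"
    and Z_ne: "(\<Inter>i. Fix (T i)) \<noteq> {}"
    and Z_reg: "bdd_lin_reg_sets (\<lambda>i. Fix (T i))"
    and pi_pos: "\<And>i. \<pi> i > 0"
    and pi_sum: "(\<Sum>i\<in>UNIV. \<pi> i) = 1"
  shows "\<exists>\<theta><1. \<forall>(M :: 'b measure) (idx :: nat \<Rightarrow> 'b \<Rightarrow> 'i).
           (prob_space M \<and>
            prob_space.indep_vars M (\<lambda>_. count_space UNIV) idx UNIV \<and>
            (\<forall>n i. measure M {\<omega> \<in> space M. idx n \<omega> = i} = \<pi> i))
           \<longrightarrow> (\<forall>n. AE \<omega> in M.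
                  real_cond_exp M (vimage_algebra (space M) (rand_iter T idx x0 n) borel)
                    (\<lambda>\<omega>. (infdist (rand_iter T idx x0 (Suc n) \<omega>) (\<Inter>i. Fix (T i)))\<^sup>2) \<omega>
                  \<le> \<theta> * (infdist (rand_iter T idx x0 n \<omega>) (\<Inter>i. Fix (T i)))\<^sup>2)"
proof -
  obtain z where z: "z \<in> (\<Inter>i. Fix (T i))" using Z_ne by blast
  define \<rho> where "\<rho> = norm z + norm (x0 - z) + 1"
  have "\<rho> > 0" unfolding \<rho>_def using norm_ge_zero[of z] norm_ge_zero[of "x0 - z"] by linarith
  then obtain \<theta> where "\<theta> < 1" and rate: "\<And>x. norm x \<le> \<rho> \<Longrightarrow>
      (\<Sum>i\<in>UNIV. \<pi> i * (infdist (T i x) (\<Inter>i. Fix (T i)))\<^sup>2) \<le> \<theta> * (infdist x (\<Inter>i. Fix (T i)))\<^sup>2"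
    using linear_rate_on_ball[OF avg reg Z_reg pi_pos pi_sum] by blast
  have in_ball: "norm (rand_iter T idx x0 n \<omega>) \<le> \<rho>" for idx :: "nat \<Rightarrow> 'b \<Rightarrow> 'i" and n \<omega>
  proof -
    have "norm (rand_iter T idx x0 n \<omega> - z) \<le> norm (x0 - z)"
      using z by (intro rand_iter_bounded averaged_quasi_nonexpansive[OF avg]) auto
    then show ?thesis unfolding \<rho>_def using norm_triangle_sub[of "rand_iter T idx x0 n \<omega>" z] by linarith
  qed
  show ?thesis
  proof (intro exI[of _ \<theta>] conjI allI impI)
    fix M :: "'b measure" and idx :: "nat \<Rightarrow> 'b \<Rightarrow> 'i" and n
    assume "prob_space M \<and> prob_space.indep_vars M (\<lambda>_. count_space UNIV) idx UNIV \<and>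
            (\<forall>n i. measure M {\<omega> \<in> space M. idx n \<omega> = i} = \<pi> i)"
    then have "AE \<omega> in M.
           real_cond_exp M (vimage_algebra (space M) (rand_iter T idx x0 n) borel)
             (\<lambda>\<omega>. (infdist (rand_iter T idx x0 (Suc n) \<omega>) (\<Inter>i. Fix (T i)))\<^sup>2) \<omega>
           = (\<Sum>i\<in>UNIV. \<pi> i * (infdist (T i (rand_iter T idx x0 n \<omega>)) (\<Inter>i. Fix (T i)))\<^sup>2)"
      by (intro cond_exp_rand_iter_step[OF avg z]) auto
    then show "AE \<omega> in M.
           real_cond_exp M (vimage_algebra (space M) (rand_iter T idx x0 n) borel)
             (\<lambda>\<omega>. (infdist (rand_iter T idx x0 (Suc n) \<omega>) (\<Inter>i. Fix (T i)))\<^sup>2) \<omega>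
           \<le> \<theta> * (infdist (rand_iter T idx x0 n \<omega>) (\<Inter>i. Fix (T i)))\<^sup>2"
      by (rule eventually_mono) (simp add: rate[OF in_ball])
  qed fact
qed

end
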